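(* (De Morgan laws.) (i) For every proposition $A$: $\vdash^H_{\mathbf{CPL*}}\Diamond\neg A\supset\neg\Box A$ and $\vdash^H_{\mathbf{CPL*}}\Box\neg A\supset\neg\Diamond A$. (ii) Neither $\Diamond\neg A\supset\neg\Box A$ nor $\Box\neg A\supset\neg\Diamond A$ is an axiom of CPL. (iii) For every converse well-founded $(W,\prec)$, context $\Gamma$, world $w$ and proposition $A$: if there is no $w'$ with $w\prec w'$ and $\Gamma\Rightarrow\bot[w']$, then $\Gamma\Rightarrow(\Diamond\neg A\supset\neg\Box A)[w]$ and $\Gamma\Rightarrow(\Box\neg A\supset\neg\Diamond A)[w]$. (iv) $\neg\Diamond A\supset\Box\neg A$ is an axiom of neither CPL nor CPL*. (v) $\neg\Box A\supset\Diamond\neg A$ is an axiom of neither CPL nor CPL*.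
   Context: A set $W$ of worlds with a binary accessibility relation $\prec$ is converse well-founded if there is no infinite chain $w_0\prec w_1\prec\cdots$; $\prec^*$ denotes its reflexive–transitive closure. Propositions: $A,B,C ::= Q\mid\bot\mid A\supset B\mid\Diamond A\mid\Box A$ ($Q$ atomic); $\neg A$ abbreviates $A\supset\bot$. A context $\Gamma$ is a finite collection of judgments $A[w]$. All judgments below are defined one world at a time (provability at $w$ after provability at all worlds reachable from $w$ by one or more $\prec$-steps), each as the least relation closed under its rules. CPL natural deduction $\Gamma\vdash_{\mathbf{CPL}}A[w]$: (hyp) $\Gamma,A[w]\vdash A[w]$; ($\bot E$) $\Gamma\vdash\bot[w]$ implies $\Gamma\vdash C[w]$; ($\supset I$) $\Gamma,A[w]\vdash B[w]$ implies $\Gamma\vdash A\supset B[w]$; ($\supset E$) $\Gamma\vdash A\supset B[w]$ and $\Gamma\vdash A[w]$ imply $\Gamma\vdash B[w]$; ($\Diamond I$) $w\prec w'$ and $\Gamma\vdash A[w']$ imply $\Gamma\vdash\Diamond A[w]$; ($\Box I$) if $\Gamma\vdash A[w']$ for all $w'$ with $w\prec w'$ then $\Gamma\vdash\Box A[w]$; ($\Diamond E$) if $\Gamma\vdash\Diamond A[w]$ and for all $w'$ with $w\prec w'$, $\Gamma\vdash A[w']$ implies $\Gamma\vdash C[w]$, then $\Gamma\vdash C[w]$; ($\Box E$) if $\Gamma\vdash\Box A[w]$ and ($\Gamma\vdash A[w']$ for all $w'$ with $w\prec w'$) implies $\Gamma\vdash C[w]$, then $\Gamma\vdash C[w]$.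 CPL* natural deduction $\Gamma\vdash_{\mathbf{CPL*}}A[w]$: identical except ($\bot E$) $w'\prec^* w$ and $\Gamma\vdash\bot[w]$ imply $\Gamma\vdash C[w']$; ($\Diamond E$) if $w''\prec^* w$, $\Gamma\vdash\Diamond A[w]$, and for all $w'$ with $w\prec w'$, $\Gamma\vdash A[w']$ implies $\Gamma\vdash C[w'']$, then $\Gamma\vdash C[w'']$; ($\Box E$) if $w''\prec^* w$, $\Gamma\vdash\Box A[w]$, and ($\Gamma\vdash A[w']$ for all $w'$ with $w\prec w'$) implies $\Gamma\vdash C[w'']$, then $\Gamma\vdash C[w'']$. CPL sequent calculus $\Gamma\Rightarrow A[w]$: (init) $\Gamma,Q[w]\Rightarrow Q[w]$ for $Q$ atomic; ($\bot L$) $\bot[w]\in\Gamma$ implies $\Gamma\Rightarrow C[w]$; ($\supset R$) $\Gamma,A[w]\Rightarrow B[w]$ implies $\Gamma\Rightarrow A\supset B[w]$; ($\supset L$) $A\supset B[w]\in\Gamma$, $\Gamma\Rightarrow A[w]$ and $\Gamma,B[w]\Rightarrow C[w]$ imply $\Gamma\Rightarrow C[w]$; ($\Diamond R$) $w\prec w'$ and $\Gamma\Rightarrow A[w']$ imply $\Gamma\Rightarrow\Diamond A[w]$; ($\Box R$) if $\Gamma\Rightarrow A[w']$ for all $w'$ with $w\prec w'$ then $\Gamma\Rightarrow\Box A[w]$; ($\Diamond L$) if $\Diamond A[w]\in\Gamma$ and for all $w'$ with $w\prec w'$, $\Gamma\Rightarrow A[w']$ implies $\Gamma\Rightarrow C[w]$,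 then $\Gamma\Rightarrow C[w]$; ($\Box L$) if $\Box A[w]\in\Gamma$ and ($\Gamma\Rightarrow A[w']$ for all $w'$ with $w\prec w'$) implies $\Gamma\Rightarrow C[w]$, then $\Gamma\Rightarrow C[w]$. $\vdash^H_{\mathbf{CPL*}}A$ means: for every converse well-founded $(W,\prec)$, every $w\in W$ and every context $\Gamma$, $\Gamma\vdash_{\mathbf{CPL*}}A[w]$. A schema is "not an axiom" of CPL (resp. CPL* ) if there exist a converse well-founded $(W,\prec)$, a world $w$, a context $\Gamma$ and an instance $A$ of the schema with $\Gamma\nvdash_{\mathbf{CPL}}A[w]$ (resp. $\Gamma\nvdash_{\mathbf{CPL*}}A[w]$). *)

theory Defs
  imports Main
begin

datatype 'a fm = Atom 'a | Bot | Imp "'a fm" "'a fm" | Dia "'a fm" | Box "'a fm"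

definition Neg :: "'a fm \<Rightarrow> 'a fm" where
  "Neg A = Imp A Bot"

type_synonym ('a, 'w) ctx = "('a fm \<times> 'w) list"

definition cwf :: "('w \<Rightarrow> 'w \<Rightarrow> bool) \<Rightarrow> bool" where
  "cwf R \<longleftrightarrow> \<not> (\<exists>f :: nat \<Rightarrow> 'w. \<forall>i. R (f i) (f (Suc i)))"

text \<open>Each judgment is defined one world at a time.  The parameter Q is the
  (already defined) provability at worlds reachable from the current world w
  by one or more steps; the inductive predicate is provability at w itself.\<close>

inductive cpl_at :: "('w \<Rightarrow> 'w \<Rightarrow> bool) \<Rightarrow> (('a,'w) ctx \<Rightarrow> 'a fm \<Rightarrow> 'w \<Rightarrow> bool)
    \<Rightarrow> 'w \<Rightarrow> ('a,'w) ctx \<Rightarrow> 'a fm \<Rightarrow> bool"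
  for R Q w where
  hyp: "(A, w) \<in> set \<Gamma> \<Longrightarrow> cpl_at R Q w \<Gamma> A"
| botE: "cpl_at R Q w \<Gamma> Bot \<Longrightarrow> cpl_at R Q w \<Gamma> C"
| impI: "cpl_at R Q w ((A, w) # \<Gamma>) B \<Longrightarrow> cpl_at R Q w \<Gamma> (Imp A B)"
| impE: "cpl_at R Q w \<Gamma> (Imp A B) \<Longrightarrow> cpl_at R Q w \<Gamma> A \<Longrightarrow> cpl_at R Q w \<Gamma> B"
| diaI: "R w w' \<Longrightarrow> Q \<Gamma> A w' \<Longrightarrow> cpl_at R Q w \<Gamma> (Dia A)"
| boxI: "(\<forall>w'. R w w' \<longrightarrow> Q \<Gamma> A w') \<Longrightarrow> cpl_at R Q w \<Gamma> (Box A)"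
| diaE: "cpl_at R Q w \<Gamma> (Dia A) \<Longrightarrow>
         (\<forall>w'. R w w' \<longrightarrow> Q \<Gamma> A w' \<longrightarrow> cpl_at R Q w \<Gamma> C) \<Longrightarrow> cpl_at R Q w \<Gamma> C"
| boxE: "cpl_at R Q w \<Gamma> (Box A) \<Longrightarrow>
         ((\<forall>w'. R w w' \<longrightarrow> Q \<Gamma> A w') \<longrightarrow> cpl_at R Q w \<Gamma> C) \<Longrightarrow> cpl_at R Q w \<Gamma> C"

text \<open>CPL*: the current world w plays the role of w''; w'' \<prec>* v is split into
  v = w (rules "here") and w \<prec>+ v (rules "far").\<close>
inductive cpls_at :: "('w \<Rightarrow> 'w \<Rightarrow> bool) \<Rightarrow> (('a,'w) ctx \<Rightarrow> 'a fm \<Rightarrow> 'w \<Rightarrow> bool)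
    \<Rightarrow> 'w \<Rightarrow> ('a,'w) ctx \<Rightarrow> 'a fm \<Rightarrow> bool"
  for R Q w where
  hyp: "(A, w) \<in> set \<Gamma> \<Longrightarrow> cpls_at R Q w \<Gamma> A"
| botE_here: "cpls_at R Q w \<Gamma> Bot \<Longrightarrow> cpls_at R Q w \<Gamma> C"
| botE_far: "R\<^sup>+\<^sup>+ w v \<Longrightarrow> Q \<Gamma> Bot v \<Longrightarrow> cpls_at R Q w \<Gamma> C"
| impI: "cpls_at R Q w ((A, w) # \<Gamma>) B \<Longrightarrow> cpls_at R Q w \<Gamma> (Imp A B)"
| impE: "cpls_at R Q w \<Gamma> (Imp A B) \<Longrightarrow> cpls_at R Q w \<Gamma> A \<Longrightarrow> cpls_at R Q w \<Gamma> B"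
| diaI: "R w w' \<Longrightarrow> Q \<Gamma> A w' \<Longrightarrow> cpls_at R Q w \<Gamma> (Dia A)"
| boxI: "(\<forall>w'. R w w' \<longrightarrow> Q \<Gamma> A w') \<Longrightarrow> cpls_at R Q w \<Gamma> (Box A)"
| diaE_here: "cpls_at R Q w \<Gamma> (Dia A) \<Longrightarrow>
         (\<forall>w'. R w w' \<longrightarrow> Q \<Gamma> A w' \<longrightarrow> cpls_at R Q w \<Gamma> C) \<Longrightarrow> cpls_at R Q w \<Gamma> C"
| diaE_far: "R\<^sup>+\<^sup>+ w v \<Longrightarrow> Q \<Gamma> (Dia A) v \<Longrightarrow>
         (\<forall>w'. R v w' \<longrightarrow> Q \<Gamma> A w' \<longrightarrow> cpls_at R Q w \<Gamma> C) \<Longrightarrow> cpls_at R Q w \<Gamma> C"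
| boxE_here: "cpls_at R Q w \<Gamma> (Box A) \<Longrightarrow>
         ((\<forall>w'. R w w' \<longrightarrow> Q \<Gamma> A w') \<longrightarrow> cpls_at R Q w \<Gamma> C) \<Longrightarrow> cpls_at R Q w \<Gamma> C"
| boxE_far: "R\<^sup>+\<^sup>+ w v \<Longrightarrow> Q \<Gamma> (Box A) v \<Longrightarrow>
         ((\<forall>w'. R v w' \<longrightarrow> Q \<Gamma> A w') \<longrightarrow> cpls_at R Q w \<Gamma> C) \<Longrightarrow> cpls_at R Q w \<Gamma> C"

inductive seq_at :: "('w \<Rightarrow> 'w \<Rightarrow> bool) \<Rightarrow> (('a,'w) ctx \<Rightarrow> 'a fm \<Rightarrow> 'w \<Rightarrow> bool)
    \<Rightarrow> 'w \<Rightarrow> ('a,'w) ctx \<Rightarrow> 'a fm \<Rightarrow> bool"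
  for R Q w where
  init: "(Atom q, w) \<in> set \<Gamma> \<Longrightarrow> seq_at R Q w \<Gamma> (Atom q)"
| botL: "(Bot, w) \<in> set \<Gamma> \<Longrightarrow> seq_at R Q w \<Gamma> C"
| impR: "seq_at R Q w ((A, w) # \<Gamma>) B \<Longrightarrow> seq_at R Q w \<Gamma> (Imp A B)"
| impL: "(Imp A B, w) \<in> set \<Gamma> \<Longrightarrow> seq_at R Q w \<Gamma> A \<Longrightarrow>
         seq_at R Q w ((B, w) # \<Gamma>) C \<Longrightarrow> seq_at R Q w \<Gamma> C"
| diaR: "R w w' \<Longrightarrow> Q \<Gamma> A w' \<Longrightarrow> seq_at R Q w \<Gamma> (Dia A)"
| boxR: "(\<forall>w'. R w w' \<longrightarrow> Q \<Gamma> A w') \<Longrightarrow> seq_at R Q w \<Gamma> (Box A)"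
| diaL: "(Dia A, w) \<in> set \<Gamma> \<Longrightarrow>
         (\<forall>w'. R w w' \<longrightarrow> Q \<Gamma> A w' \<longrightarrow> seq_at R Q w \<Gamma> C) \<Longrightarrow> seq_at R Q w \<Gamma> C"
| boxL: "(Box A, w) \<in> set \<Gamma> \<Longrightarrow>
         ((\<forall>w'. R w w' \<longrightarrow> Q \<Gamma> A w') \<longrightarrow> seq_at R Q w \<Gamma> C) \<Longrightarrow> seq_at R Q w \<Gamma> C"

text \<open>Stratified definition by well-founded recursion along the converse of \<prec>+
  (well-founded whenever R is converse well-founded).\<close>

definition later :: "('w \<Rightarrow> 'w \<Rightarrow> bool) \<Rightarrow> ('w \<times> 'w) set" where
  "later R = {(v, w). R\<^sup>+\<^sup>+ w v}"

definition strat ::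
  "('w \<Rightarrow> 'w \<Rightarrow> bool) \<Rightarrow>
   (('w \<Rightarrow> 'w \<Rightarrow> bool) \<Rightarrow> (('a,'w) ctx \<Rightarrow> 'a fm \<Rightarrow> 'w \<Rightarrow> bool) \<Rightarrow> 'w \<Rightarrow> ('a,'w) ctx \<Rightarrow> 'a fm \<Rightarrow> bool)
   \<Rightarrow> ('a,'w) ctx \<Rightarrow> 'a fm \<Rightarrow> 'w \<Rightarrow> bool" where
  "strat R step \<Gamma> A w =
     wfrec (later R) (\<lambda>f w. step R (\<lambda>\<Gamma>' A' v. f v \<Gamma>' A') w) w \<Gamma> A"

definition CPL :: "('w \<Rightarrow> 'w \<Rightarrow> bool) \<Rightarrow> ('a,'w) ctx \<Rightarrow> 'a fm \<Rightarrow> 'w \<Rightarrow> bool" where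
  "CPL R = strat R cpl_at"

definition CPLs :: "('w \<Rightarrow> 'w \<Rightarrow> bool) \<Rightarrow> ('a,'w) ctx \<Rightarrow> 'a fm \<Rightarrow> 'w \<Rightarrow> bool" where
  "CPLs R = strat R cpls_at"

definition Seq :: "('w \<Rightarrow> 'w \<Rightarrow> bool) \<Rightarrow> ('a,'w) ctx \<Rightarrow> 'a fm \<Rightarrow> 'w \<Rightarrow> bool" where
  "Seq R = strat R seq_at"

end

theory Submission
  imports Defs
begin

text \<open>
  In CPL* a proof of \<open>\<bottom>\<close> at any later world may be eliminated at \<open>w\<close>. So from
  \<open>\<diamond>\<not>A\<close> and \<open>\<box>A\<close> at \<open>w\<close> the elimination rules yield \<open>\<not>A\<close> and \<open>A\<close>, hence \<open>\<bottom>\<close>, at a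
  successor \<open>u\<close>, and \<open>\<bottom>\<close> is transported back to \<open>w\<close>. The sequent calculus has no such
  transport: there \<open>\<bottom>\<close> at \<open>u\<close> comes from admissibility of cut at a single world, and the
  assumption that \<open>\<bottom>\<close> is unprovable at the successors of \<open>w\<close> closes the branch. In both arguments the hypotheses
  added at \<open>w\<close> are invisible at \<open>u\<close>: provability at a world depends only on hypotheses at
  worlds reachable from it, and by converse well-foundedness \<open>w\<close> is not reachable from \<open>u\<close>.

  The failures live on the frame \<open>0 \<prec> 1\<close>. At the dead end \<open>1\<close> all rules are sound for any
  classical valuation making \<open>\<diamond>\<close>-formulas false and \<open>\<box>\<close>-formulas true. At the root, CPL is
  sound for the classical reading in which \<open>\<diamond>B\<close> and \<open>\<box>B\<close> both mean that \<open>B\<close> is provable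
  at \<open>1\<close>; CPL* is sound for it as long as neither \<open>\<bottom>\<close> nor a \<open>\<diamond>\<close>-formula is provable at \<open>1\<close>,
  because its rules for later worlds are then vacuous. Assuming \<open>\<bottom>\<close> at \<open>1\<close> makes \<open>\<diamond>\<not>A\<close> and
  \<open>\<box>A\<close> both true at \<open>0\<close>, refuting (ii). Without hypotheses neither \<open>a\<close> nor \<open>\<not>a\<close> is provable
  at \<open>1\<close>, so \<open>\<not>\<diamond>a\<close> and \<open>\<not>\<box>a\<close> hold at \<open>0\<close> while \<open>\<box>\<not>a\<close> and \<open>\<diamond>\<not>a\<close> fail, refuting (iv) and (v).
\<close>

section \<open>Unfolding the stratified judgments\<close>

type_synonym ('a, 'w) provability = "('a,'w) ctx \<Rightarrow> 'a fm \<Rightarrow> 'w \<Rightarrow> bool"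
type_synonym ('a, 'w) rules =
  "('w \<Rightarrow> 'w \<Rightarrow> bool) \<Rightarrow> ('a,'w) provability \<Rightarrow> 'w \<Rightarrow> ('a,'w) ctx \<Rightarrow> 'a fm \<Rightarrow> bool"

lemma wf_later:
  assumes "cwf R"
  shows "wf (later R)"
proof -
  have "wf {(v, w). R w v}"
    using assms unfolding wf_iff_no_infinite_down_chain cwf_def by auto
  then have "wf ({(v, w). R w v}\<^sup>+)"
    by (rule wf_trancl)
  also have "{(v, w). R w v}\<^sup>+ = later R"
    using trancl_converse[of "{(u, v). R u v}"]
    unfolding later_def by (auto simp: tranclp_unfold converse_unfold)
  finally show ?thesis .
qed

lemma cwf_no_return: "cwf R \<Longrightarrow> R w u \<Longrightarrow> \<not> R\<^sup>*\<^sup>* u w"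
  using wf_not_refl[OF wf_later] unfolding later_def by (fastforce intro: rtranclp_into_tranclp2)

definition strat_beyond :: "('w \<Rightarrow> 'w \<Rightarrow> bool) \<Rightarrow> ('a,'w) rules \<Rightarrow> 'w \<Rightarrow> ('a,'w) provability" where
  "strat_beyond R step w =
     (\<lambda>\<Gamma> A v. if R\<^sup>+\<^sup>+ w v then strat R step \<Gamma> A v else undefined \<Gamma> A)"

lemma strat_beyond_tranclp [simp]:
  "R\<^sup>+\<^sup>+ w v \<Longrightarrow> strat_beyond R step w \<Gamma> A v = strat R step \<Gamma> A v"
  by (simp add: strat_beyond_def)

lemma strat_beyond_succ [simp]:
  "R w v \<Longrightarrow> strat_beyond R step w \<Gamma> A v = strat R step \<Gamma> A v"
  by (simp add: tranclp.r_into_trancl)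

lemma strat_unfold:
  assumes "cwf R"
  shows "strat R step \<Gamma> A w = step R (strat_beyond R step w) w \<Gamma> A"
  unfolding strat_def
  by (subst wfrec[OF wf_later[OF assms]]) (simp add: cut_def strat_beyond_def later_def strat_def)

lemma CPL_unfold: "cwf R \<Longrightarrow> CPL R \<Gamma> A w = cpl_at R (strat_beyond R cpl_at w) w \<Gamma> A"
  unfolding CPL_def by (rule strat_unfold)

lemma CPLs_unfold: "cwf R \<Longrightarrow> CPLs R \<Gamma> A w = cpls_at R (strat_beyond R cpls_at w) w \<Gamma> A"
  unfolding CPLs_def by (rule strat_unfold)

lemma Seq_unfold: "cwf R \<Longrightarrow> Seq R \<Gamma> A w = seq_at R (strat_beyond R seq_at w) w \<Gamma> A"
  unfolding Seq_def by (rule strat_unfold)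

section \<open>Provability depends only on hypotheses at reachable worlds\<close>

definition agree_from :: "('w \<Rightarrow> 'w \<Rightarrow> bool) \<Rightarrow> 'w \<Rightarrow> ('a,'w) ctx \<Rightarrow> ('a,'w) ctx \<Rightarrow> bool" where
  "agree_from R v \<Gamma> \<Gamma>' \<longleftrightarrow> (\<forall>u X. R\<^sup>*\<^sup>* v u \<longrightarrow> ((X, u) \<in> set \<Gamma> \<longleftrightarrow> (X, u) \<in> set \<Gamma>'))"

lemma agree_from_refl: "agree_from R v \<Gamma> \<Gamma>"
  by (simp add: agree_from_def)

lemma agree_from_sym: "agree_from R v \<Gamma> \<Gamma>' \<Longrightarrow> agree_from R v \<Gamma>' \<Gamma>"
  unfolding agree_from_def by blast

lemma agree_from_Cons: "agree_from R v \<Gamma> \<Gamma>' \<Longrightarrow> agree_from R v ((A, v) # \<Gamma>) ((A, v) # \<Gamma>')"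
  unfolding agree_from_def by auto

lemma agree_from_hyp: "agree_from R v \<Gamma> \<Gamma>' \<Longrightarrow> (A, v) \<in> set \<Gamma> \<Longrightarrow> (A, v) \<in> set \<Gamma>'"
  unfolding agree_from_def by auto

lemma agree_from_Cons_unreachable:
  "\<not> R\<^sup>*\<^sup>* v w \<Longrightarrow> agree_from R v \<Gamma> \<Gamma>' \<Longrightarrow> agree_from R v ((A, w) # \<Gamma>) \<Gamma>'"
  unfolding agree_from_def by auto

lemma agree_from_tranclp: "agree_from R v \<Gamma> \<Gamma>' \<Longrightarrow> R\<^sup>+\<^sup>+ v u \<Longrightarrow> agree_from R u \<Gamma> \<Gamma>'"
  unfolding agree_from_def by (meson rtranclp_trans tranclp_into_rtranclp)

definition equiv_beyond ::
  "('w \<Rightarrow> 'w \<Rightarrow> bool) \<Rightarrow> 'w \<Rightarrow> ('a,'w) provability \<Rightarrow> ('a,'w) provability \<Rightarrow> bool" where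
  "equiv_beyond R v Q Q' \<longleftrightarrow>
     (\<forall>\<Gamma> \<Gamma>' X u. R\<^sup>+\<^sup>+ v u \<longrightarrow> agree_from R u \<Gamma> \<Gamma>' \<longrightarrow> Q \<Gamma> X u = Q' \<Gamma>' X u)"

lemma equiv_beyond_tranclp:
  "equiv_beyond R v Q Q' \<Longrightarrow> R\<^sup>+\<^sup>+ v u \<Longrightarrow> agree_from R v \<Gamma> \<Gamma>' \<Longrightarrow> Q \<Gamma> X u = Q' \<Gamma>' X u"
  unfolding equiv_beyond_def by (blast dest: agree_from_tranclp)

lemma equiv_beyond_succ:
  "equiv_beyond R v Q Q' \<Longrightarrow> R v u \<Longrightarrow> agree_from R v \<Gamma> \<Gamma>' \<Longrightarrow> Q \<Gamma> X u = Q' \<Gamma>' X u"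
  by (rule equiv_beyond_tranclp) (auto intro: tranclp.r_into_trancl)

definition step_congruent :: "('a,'w) rules \<Rightarrow> bool" where
  "step_congruent step \<longleftrightarrow> (\<forall>R Q Q' v \<Gamma> \<Gamma>' X.
     equiv_beyond R v Q Q' \<longrightarrow> agree_from R v \<Gamma> \<Gamma>' \<longrightarrow> step R Q v \<Gamma> X \<longrightarrow> step R Q' v \<Gamma>' X)"

lemma strat_agree_iff:
  assumes "cwf R" "step_congruent step" "agree_from R v \<Gamma> \<Gamma>'"
  shows "strat R step \<Gamma> X v \<longleftrightarrow> strat R step \<Gamma>' X v"
  using assms(3)
proof (induction v arbitrary: \<Gamma> \<Gamma>' X rule: wf_induct[OF wf_later[OF assms(1)]])
  case (1 v)
  have "equiv_beyond R v (strat_beyond R step v) (strat_beyond R step v)"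
    using 1(1) by (simp add: equiv_beyond_def later_def)
  with assms(2) 1(2) agree_from_sym[OF 1(2)] show ?case
    unfolding strat_unfold[OF assms(1)] step_congruent_def by blast
qed

lemma cpl_at_transfer:
  assumes "equiv_beyond R v Q Q'"
  shows "cpl_at R Q v \<Gamma> X \<Longrightarrow> agree_from R v \<Gamma> \<Gamma>' \<Longrightarrow> cpl_at R Q' v \<Gamma>' X"
proof (induction arbitrary: \<Gamma>' rule: cpl_at.induct)
  case (impI A \<Gamma> B)
  then show ?case by (blast intro: cpl_at.impI agree_from_Cons)
next
  case (diaE \<Gamma> A C)
  show ?case
    by (rule cpl_at.diaE[of R Q' v \<Gamma>' A])
      (use diaE equiv_beyond_succ[OF assms _ diaE.prems] in auto)
next
  case (boxE \<Gamma> A C)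
  show ?case
    by (rule cpl_at.boxE[of R Q' v \<Gamma>' A])
      (use boxE equiv_beyond_succ[OF assms _ boxE.prems] in auto)
qed (use equiv_beyond_succ[OF assms] in
      \<open>auto intro: cpl_at.hyp cpl_at.botE cpl_at.impE cpl_at.diaI cpl_at.boxI
        agree_from_hyp agree_from_Cons\<close>)

lemma cpls_at_transfer:
  assumes "equiv_beyond R v Q Q'"
  shows "cpls_at R Q v \<Gamma> X \<Longrightarrow> agree_from R v \<Gamma> \<Gamma>' \<Longrightarrow> cpls_at R Q' v \<Gamma>' X"
proof (induction arbitrary: \<Gamma>' rule: cpls_at.induct)
  case (impI A \<Gamma> B)
  then show ?case by (blast intro: cpls_at.impI agree_from_Cons)
next
  case (diaE_here \<Gamma> A C)
  show ?case
    by (rule cpls_at.diaE_here[of R Q' v \<Gamma>' A])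
      (use diaE_here equiv_beyond_succ[OF assms _ diaE_here.prems] in auto)
next
  case (boxE_here \<Gamma> A C)
  show ?case
    by (rule cpls_at.boxE_here[of R Q' v \<Gamma>' A])
      (use boxE_here equiv_beyond_succ[OF assms _ boxE_here.prems] in auto)
next
  case (diaE_far u \<Gamma> A C)
  show ?case
    by (rule cpls_at.diaE_far[of R v u Q' \<Gamma>' A])
      (use diaE_far equiv_beyond_tranclp[OF assms _ diaE_far.prems] in
        \<open>auto intro: tranclp.trancl_into_trancl\<close>)
next
  case (boxE_far u \<Gamma> A C)
  show ?case
    by (rule cpls_at.boxE_far[of R v u Q' \<Gamma>' A])
      (use boxE_far equiv_beyond_tranclp[OF assms _ boxE_far.prems] in
        \<open>auto intro: tranclp.trancl_into_trancl\<close>)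
qed (use equiv_beyond_succ[OF assms] equiv_beyond_tranclp[OF assms] in
      \<open>auto intro: cpls_at.hyp cpls_at.botE_here cpls_at.botE_far cpls_at.impE
        cpls_at.diaI cpls_at.boxI agree_from_hyp agree_from_Cons\<close>)

lemma seq_at_transfer:
  assumes "equiv_beyond R v Q Q'"
  shows "seq_at R Q v \<Gamma> X \<Longrightarrow> agree_from R v \<Gamma> \<Gamma>' \<Longrightarrow> seq_at R Q' v \<Gamma>' X"
proof (induction arbitrary: \<Gamma>' rule: seq_at.induct)
  case (impR A \<Gamma> B)
  then show ?case by (blast intro: seq_at.impR agree_from_Cons)
next
  case (diaL A \<Gamma> C)
  show ?case
    by (rule seq_at.diaL[of A v \<Gamma>' R Q'])
      (use diaL equiv_beyond_succ[OF assms _ diaL.prems] agree_from_hyp[OF diaL.prems] in auto)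
next
  case (boxL A \<Gamma> C)
  show ?case
    by (rule seq_at.boxL[of A v \<Gamma>' R Q'])
      (use boxL equiv_beyond_succ[OF assms _ boxL.prems] agree_from_hyp[OF boxL.prems] in auto)
qed (use equiv_beyond_succ[OF assms] in
      \<open>auto intro: seq_at.init seq_at.botL seq_at.impL seq_at.diaR seq_at.boxR
        agree_from_hyp agree_from_Cons\<close>)

lemma step_congruent_cpl_at: "step_congruent cpl_at"
  unfolding step_congruent_def by (blast intro: cpl_at_transfer)

lemma step_congruent_cpls_at: "step_congruent cpls_at"
  unfolding step_congruent_def by (blast intro: cpls_at_transfer)

lemma step_congruent_seq_at: "step_congruent seq_at"
  unfolding step_congruent_def by (blast intro: seq_at_transfer)

lemma CPL_agree_iff: "cwf R \<Longrightarrow> agree_from R v \<Gamma> \<Gamma>' \<Longrightarrow> CPL R \<Gamma> X v = CPL R \<Gamma>' X v"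
  unfolding CPL_def by (rule strat_agree_iff[OF _ step_congruent_cpl_at])

lemma CPLs_agree_iff: "cwf R \<Longrightarrow> agree_from R v \<Gamma> \<Gamma>' \<Longrightarrow> CPLs R \<Gamma> X v = CPLs R \<Gamma>' X v"
  unfolding CPLs_def by (rule strat_agree_iff[OF _ step_congruent_cpls_at])

lemma Seq_agree_iff: "cwf R \<Longrightarrow> agree_from R v \<Gamma> \<Gamma>' \<Longrightarrow> Seq R \<Gamma> X v = Seq R \<Gamma>' X v"
  unfolding Seq_def by (rule strat_agree_iff[OF _ step_congruent_seq_at])

lemma Seq_Cons_pred_iff:
  assumes "cwf R" "R w v"
  shows "Seq R ((X, w) # \<Gamma>) Y v = Seq R \<Gamma> Y v"
  using cwf_no_return[OF assms] agree_from_refl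
  by (intro Seq_agree_iff[OF assms(1)] agree_from_Cons_unreachable)

section \<open>The De Morgan laws in CPL*\<close>

lemma CPLs_impI: "cwf R \<Longrightarrow> CPLs R ((A, w) # \<Gamma>) B w \<Longrightarrow> CPLs R \<Gamma> (Imp A B) w"
  by (simp add: CPLs_unfold cpls_at.impI)

lemma CPLs_mp: "cwf R \<Longrightarrow> CPLs R \<Gamma> A w \<Longrightarrow> CPLs R \<Gamma> (Neg A) w \<Longrightarrow> CPLs R \<Gamma> Bot w"
  by (simp add: CPLs_unfold Neg_def cpls_at.impE)

lemma CPLs_dia_box_inconsistent:
  assumes "cwf R" "(Dia B, w) \<in> set \<Gamma>" "(Box C, w) \<in> set \<Gamma>"
    and clash: "\<And>u. R w u \<Longrightarrow> CPLs R \<Gamma> B u \<Longrightarrow> CPLs R \<Gamma> C u \<Longrightarrow> CPLs R \<Gamma> Bot u"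
  shows "CPLs R \<Gamma> Bot w"
proof -
  let ?Q = "strat_beyond R cpls_at w"
  have "cpls_at R ?Q w \<Gamma> Bot"
  proof (rule cpls_at.diaE_here[of R _ w \<Gamma> B])
    show "cpls_at R ?Q w \<Gamma> (Dia B)"
      using assms(2) by (rule cpls_at.hyp)
    show "\<forall>u. R w u \<longrightarrow> ?Q \<Gamma> B u \<longrightarrow> cpls_at R ?Q w \<Gamma> Bot"
    proof (intro allI HOL.impI)
      fix u
      assume "R w u" "?Q \<Gamma> B u"
      show "cpls_at R ?Q w \<Gamma> Bot"
      proof (rule cpls_at.boxE_here[of R _ w \<Gamma> C])
        show "cpls_at R ?Q w \<Gamma> (Box C)"
          using assms(3) by (rule cpls_at.hyp)
        show "(\<forall>u. R w u \<longrightarrow> ?Q \<Gamma> C u) \<longrightarrow> cpls_at R ?Q w \<Gamma> Bot"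
          using \<open>R w u\<close> \<open>?Q \<Gamma> B u\<close> clash
          by (auto simp: CPLs_def intro!: cpls_at.botE_far[of R w u] tranclp.r_into_trancl)
      qed
    qed
  qed
  then show ?thesis
    unfolding CPLs_unfold[OF assms(1)] .
qed

lemma CPLs_dia_neg_imp_neg_box:
  assumes "cwf R"
  shows "CPLs R \<Gamma> (Imp (Dia (Neg A)) (Neg (Box A))) w"
proof -
  have "CPLs R ((Box A, w) # (Dia (Neg A), w) # \<Gamma>) Bot w"
    by (rule CPLs_dia_box_inconsistent[OF assms, where B = "Neg A" and C = A])
      (use CPLs_mp[OF assms] in auto)
  then show ?thesis
    unfolding Neg_def[of "Box A"] using assms by (intro CPLs_impI)
qed

lemma CPLs_box_neg_imp_neg_dia:
  assumes "cwf R"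
  shows "CPLs R \<Gamma> (Imp (Box (Neg A)) (Neg (Dia A))) w"
proof -
  have "CPLs R ((Dia A, w) # (Box (Neg A), w) # \<Gamma>) Bot w"
    by (rule CPLs_dia_box_inconsistent[OF assms, where B = A and C = "Neg A"])
      (use CPLs_mp[OF assms] in auto)
  then show ?thesis
    unfolding Neg_def[of "Dia A"] using assms by (intro CPLs_impI)
qed

section \<open>Cut admissibility at a single world of the sequent calculus\<close>

definition agree_off :: "'w \<Rightarrow> ('a,'w) ctx \<Rightarrow> ('a,'w) ctx \<Rightarrow> bool" where
  "agree_off v \<Gamma> \<Gamma>' \<longleftrightarrow> (\<forall>X u. u \<noteq> v \<longrightarrow> ((X, u) \<in> set \<Gamma> \<longleftrightarrow> (X, u) \<in> set \<Gamma>'))"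

definition ignores_hyps_at :: "('w \<Rightarrow> 'w \<Rightarrow> bool) \<Rightarrow> ('a,'w) provability \<Rightarrow> 'w \<Rightarrow> bool" where
  "ignores_hyps_at R Q v \<longleftrightarrow> (\<forall>\<Gamma> \<Gamma>' Y u. R v u \<longrightarrow> agree_off v \<Gamma> \<Gamma>' \<longrightarrow> Q \<Gamma> Y u = Q \<Gamma>' Y u)"

lemma agree_off_Cons: "agree_off v ((A, v) # \<Gamma>) \<Gamma>"
  by (simp add: agree_off_def)

lemma agree_off_insert: "set \<Gamma>' = insert (A, v) (set \<Gamma>) \<Longrightarrow> agree_off v \<Gamma>' \<Gamma>"
  by (auto simp: agree_off_def)

lemma ignores_hyps_atD:
  "ignores_hyps_at R Q v \<Longrightarrow> R v u \<Longrightarrow> agree_off v \<Gamma> \<Gamma>' \<Longrightarrow> Q \<Gamma> Y u = Q \<Gamma>' Y u"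
  unfolding ignores_hyps_at_def by blast

lemma ignores_hyps_at_Seq:
  assumes "cwf R"
  shows "ignores_hyps_at R (strat_beyond R seq_at v) v"
  unfolding ignores_hyps_at_def
proof (intro allI HOL.impI)
  fix \<Gamma> \<Gamma>' Y u
  assume "R v u" "agree_off v \<Gamma> \<Gamma>'"
  then have "agree_from R u \<Gamma> \<Gamma>'"
    using cwf_no_return[OF assms] unfolding agree_off_def agree_from_def by metis
  with \<open>R v u\<close> show "strat_beyond R seq_at v \<Gamma> Y u = strat_beyond R seq_at v \<Gamma>' Y u"
    using Seq_agree_iff[OF assms] by (simp add: Seq_def)
qed

lemma seq_at_weaken:
  assumes "ignores_hyps_at R Q v"
  shows "seq_at R Q v \<Gamma> C \<Longrightarrow> set \<Gamma> \<subseteq> set \<Gamma>' \<Longrightarrow> agree_off v \<Gamma> \<Gamma>' \<Longrightarrow> seq_at R Q v \<Gamma>' C"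
proof (induction arbitrary: \<Gamma>' rule: seq_at.induct)
  case (impR A \<Gamma> B)
  have "seq_at R Q v ((A, v) # \<Gamma>') B"
    using impR.prems by (intro impR.IH) (auto simp: agree_off_def)
  then show ?case
    by (rule seq_at.impR)
next
  case (impL A B \<Gamma> C)
  have "seq_at R Q v ((B, v) # \<Gamma>') C"
    using impL.prems by (intro impL.IH(2)) (auto simp: agree_off_def)
  with impL show ?case
    by (auto intro: seq_at.impL)
next
  case (diaL A \<Gamma> C)
  show ?case
    by (rule seq_at.diaL[of A]) (use diaL ignores_hyps_atD[OF assms _ diaL.prems(2)] in auto)
next
  case (boxL A \<Gamma> C)
  show ?case
    by (rule seq_at.boxL[of A]) (use boxL ignores_hyps_atD[OF assms _ boxL.prems(2)] in auto)
qed (use ignores_hyps_atD[OF assms] in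
      \<open>auto intro: seq_at.init seq_at.botL seq_at.diaR seq_at.boxR\<close>)

lemma seq_at_weaken_Cons:
  "ignores_hyps_at R Q v \<Longrightarrow> seq_at R Q v \<Gamma> C \<Longrightarrow> seq_at R Q v ((A, v) # \<Gamma>) C"
  by (erule seq_at_weaken) (auto simp: agree_off_def)

text \<open>The modal cases are the premises of \<open>diaR\<close> and \<open>boxR\<close>; \<open>Bot\<close> has no right rule.\<close>

fun right_premise :: "('a,'w) rules" where
  "right_premise R Q v \<Gamma> Bot = False"
| "right_premise R Q v \<Gamma> (Dia A) = (\<exists>u. R v u \<and> Q \<Gamma> A u)"
| "right_premise R Q v \<Gamma> (Box A) = (\<forall>u. R v u \<longrightarrow> Q \<Gamma> A u)"
| "right_premise R Q v \<Gamma> (Atom q) = True"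
| "right_premise R Q v \<Gamma> (Imp A B) = True"

lemma right_premise_Cons:
  "ignores_hyps_at R Q v \<Longrightarrow> right_premise R Q v ((A, v) # \<Gamma>) X = right_premise R Q v \<Gamma> X"
  by (cases X) (auto simp: ignores_hyps_atD[OF _ _ agree_off_Cons])

lemma seq_at_inversion:
  assumes "ignores_hyps_at R Q v"
  shows "seq_at R Q v \<Gamma> X \<Longrightarrow> right_premise R Q v \<Gamma> X \<or> (\<forall>C. seq_at R Q v \<Gamma> C)"
proof (induction rule: seq_at.induct)
  case (botL \<Gamma> C)
  then show ?case by (blast intro: seq_at.botL)
next
  case (impL A B \<Gamma> C)
  then show ?case by (auto simp: right_premise_Cons[OF assms] intro: seq_at.impL)
next
  case (diaL A \<Gamma> C)
  then show ?case by (cases "\<exists>u. R v u \<and> Q \<Gamma> A u") (auto intro: seq_at.diaL)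
next
  case (boxL A \<Gamma> C)
  then show ?case by (cases "\<forall>u. R v u \<longrightarrow> Q \<Gamma> A u") (auto intro: seq_at.boxL)
qed auto

lemma seq_at_imp_inversion:
  assumes "ignores_hyps_at R Q v"
  shows "seq_at R Q v \<Gamma> (Imp A B) \<Longrightarrow> seq_at R Q v ((A, v) # \<Gamma>) B"
proof (induction \<Gamma> "Imp A B" rule: seq_at.induct)
  case (botL \<Gamma>)
  then show ?case by (simp add: seq_at.botL)
next
  case (impL A' B' \<Gamma>)
  have "seq_at R Q v ((B', v) # (A, v) # \<Gamma>) B"
    by (rule seq_at_weaken[OF assms impL.hyps(5)]) (auto simp: agree_off_def)
  moreover have "seq_at R Q v ((A, v) # \<Gamma>) A'"
    by (rule seq_at_weaken_Cons[OF assms impL.hyps(2)])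
  ultimately show ?case
    using impL.hyps(1) by (auto intro: seq_at.impL)
next
  case (diaL A' \<Gamma>)
  then show ?case
    by (intro seq_at.diaL[of A']) (auto simp: ignores_hyps_atD[OF assms _ agree_off_Cons])
next
  case (boxL A' \<Gamma>)
  then show ?case
    by (intro seq_at.boxL[of A']) (auto simp: ignores_hyps_atD[OF assms _ agree_off_Cons])
qed auto

lemma seq_at_cut_step:
  assumes Qv: "ignores_hyps_at R Q v"
    and cut_premise: "\<And>P B \<Delta> D. A = Imp P B \<Longrightarrow>
      seq_at R Q v \<Delta> P \<Longrightarrow> seq_at R Q v ((P, v) # \<Delta>) D \<Longrightarrow> seq_at R Q v \<Delta> D"
    and cut_conclusion: "\<And>P B \<Delta> D. A = Imp P B \<Longrightarrow>
      seq_at R Q v \<Delta> B \<Longrightarrow> seq_at R Q v ((B, v) # \<Delta>) D \<Longrightarrow> seq_at R Q v \<Delta> D"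
  shows "seq_at R Q v \<Gamma>' C \<Longrightarrow> set \<Gamma>' = insert (A, v) (set \<Gamma>) \<Longrightarrow> seq_at R Q v \<Gamma> A \<Longrightarrow>
    seq_at R Q v \<Gamma> C"
proof (induction arbitrary: \<Gamma> rule: seq_at.induct)
  case (botL \<Gamma>' C \<Gamma>)
  then show ?case using seq_at_inversion[OF Qv, of \<Gamma> Bot] by (auto intro: seq_at.botL)
next
  case (impR P \<Gamma>' B \<Gamma>)
  have "seq_at R Q v ((P, v) # \<Gamma>) B"
    by (rule impR.IH) (use impR.prems seq_at_weaken_Cons[OF Qv] in auto)
  then show ?case
    by (rule seq_at.impR)
next
  case (impL P B \<Gamma>' C \<Gamma>)
  have P: "seq_at R Q v \<Gamma> P"
    using impL.IH(1) impL.prems by blast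
  have C: "seq_at R Q v ((B, v) # \<Gamma>) C"
    by (rule impL.IH(2)) (use impL.prems seq_at_weaken_Cons[OF Qv] in auto)
  show ?case
  proof (cases "(Imp P B, v) \<in> set \<Gamma>")
    case True
    from True P C show ?thesis by (rule seq_at.impL)
  next
    case False
    then have "A = Imp P B"
      using impL by auto
    with P C impL.prems(2) show ?thesis
      using seq_at_imp_inversion[OF Qv] cut_premise cut_conclusion by metis
  qed
next
  case (diaL A' \<Gamma>' C \<Gamma>)
  have "seq_at R Q v \<Gamma> C" if "R v u" "Q \<Gamma> A' u" for u
    using diaL that ignores_hyps_atD[OF Qv _ agree_off_insert] by metis
  then show ?case
    using diaL seq_at_inversion[OF Qv diaL.prems(2)] by (auto intro: seq_at.diaL)
next
  case (boxL A' \<Gamma>' C \<Gamma>)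
  have "seq_at R Q v \<Gamma> C" if "\<forall>u. R v u \<longrightarrow> Q \<Gamma> A' u"
    using boxL that ignores_hyps_atD[OF Qv _ agree_off_insert] by metis
  then show ?case
    using boxL seq_at_inversion[OF Qv boxL.prems(2)] by (auto intro: seq_at.boxL)
qed (use ignores_hyps_atD[OF Qv _ agree_off_insert] in
      \<open>auto intro: seq_at.init seq_at.diaR seq_at.boxR\<close>)

lemma seq_at_cut:
  assumes "ignores_hyps_at R Q v"
  shows "seq_at R Q v \<Gamma> A \<Longrightarrow> seq_at R Q v ((A, v) # \<Gamma>) C \<Longrightarrow> seq_at R Q v \<Gamma> C"
proof (induction A arbitrary: \<Gamma> C)
  case (Imp P B)
  show ?case
    using Imp.IH by (rule seq_at_cut_step[OF assms _ _ Imp.prems(2)]) (auto simp: Imp.prems(1))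
next
  case (Atom q)
  show ?case
    by (rule seq_at_cut_step[OF assms _ _ Atom.prems(2)]) (auto simp: Atom.prems(1))
next
  case Bot
  show ?case
    by (rule seq_at_cut_step[OF assms _ _ Bot.prems(2)]) (auto simp: Bot.prems(1))
next
  case (Dia A)
  show ?case
    by (rule seq_at_cut_step[OF assms _ _ Dia.prems(2)]) (auto simp: Dia.prems(1))
next
  case (Box A)
  show ?case
    by (rule seq_at_cut_step[OF assms _ _ Box.prems(2)]) (auto simp: Box.prems(1))
qed

section \<open>The De Morgan laws in the sequent calculus\<close>

lemma Seq_mp:
  assumes "cwf R" "Seq R \<Gamma> A w" "Seq R \<Gamma> (Neg A) w"
  shows "Seq R \<Gamma> Bot w"
proof -
  note Qw = ignores_hyps_at_Seq[OF assms(1), of w]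
  have "seq_at R (strat_beyond R seq_at w) w ((A, w) # \<Gamma>) Bot"
    using assms(3) unfolding Seq_unfold[OF assms(1)] Neg_def by (rule seq_at_imp_inversion[OF Qw])
  with assms(2) show ?thesis
    unfolding Seq_unfold[OF assms(1)] by (rule seq_at_cut[OF Qw])
qed

lemma Seq_dia_box_inconsistent:
  assumes "cwf R" "(Dia B, w) \<in> set \<Gamma>" "(Box C, w) \<in> set \<Gamma>"
    and clash: "\<And>u. R w u \<Longrightarrow> Seq R \<Gamma> B u \<Longrightarrow> Seq R \<Gamma> C u \<Longrightarrow> False"
  shows "Seq R \<Gamma> Bot w"
  unfolding Seq_unfold[OF assms(1)]
proof (rule seq_at.diaL[OF assms(2)], intro allI HOL.impI)
  fix u
  assume "R w u" "strat_beyond R seq_at w \<Gamma> B u"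
  then show "seq_at R (strat_beyond R seq_at w) w \<Gamma> Bot"
    using clash by (intro seq_at.boxL[OF assms(3)]) (auto simp: Seq_def)
qed

lemma Seq_impR: "cwf R \<Longrightarrow> Seq R ((A, w) # \<Gamma>) B w \<Longrightarrow> Seq R \<Gamma> (Imp A B) w"
  by (simp add: Seq_unfold seq_at.impR)

lemma Seq_dia_neg_imp_neg_box:
  assumes "cwf R" "\<And>u. R w u \<Longrightarrow> \<not> Seq R \<Gamma> Bot u"
  shows "Seq R \<Gamma> (Imp (Dia (Neg A)) (Neg (Box A))) w"
proof -
  have "Seq R ((Box A, w) # (Dia (Neg A), w) # \<Gamma>) Bot w"
    by (rule Seq_dia_box_inconsistent[OF assms(1), where B = "Neg A" and C = A])
      (use assms(2) Seq_mp[OF assms(1)] in \<open>auto simp: Seq_Cons_pred_iff[OF assms(1)]\<close>)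
  then show ?thesis
    unfolding Neg_def[of "Box A"] using assms(1) by (intro Seq_impR)
qed

lemma Seq_box_neg_imp_neg_dia:
  assumes "cwf R" "\<And>u. R w u \<Longrightarrow> \<not> Seq R \<Gamma> Bot u"
  shows "Seq R \<Gamma> (Imp (Box (Neg A)) (Neg (Dia A))) w"
proof -
  have "Seq R ((Dia A, w) # (Box (Neg A), w) # \<Gamma>) Bot w"
    by (rule Seq_dia_box_inconsistent[OF assms(1), where B = A and C = "Neg A"])
      (use assms(2) Seq_mp[OF assms(1)] in \<open>auto simp: Seq_Cons_pred_iff[OF assms(1)]\<close>)
  then show ?thesis
    unfolding Neg_def[of "Dia A"] using assms(1) by (intro Seq_impR)
qed

section \<open>A two-world countermodel\<close>

fun eval :: "('a fm \<Rightarrow> bool) \<Rightarrow> 'a fm \<Rightarrow> bool" where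
  "eval I Bot = False"
| "eval I (Imp A B) = (eval I A \<longrightarrow> eval I B)"
| "eval I X = I X"

lemma eval_Neg [simp]: "eval I (Neg A) = (\<not> eval I A)"
  by (simp add: Neg_def)

lemma CPL_dead_end_sound:
  assumes "cwf R" "\<And>u. \<not> R w u" "\<And>A. \<not> I (Dia A)" "\<And>A. I (Box A)"
    and "CPL R \<Gamma> X w" "\<forall>Y. (Y, w) \<in> set \<Gamma> \<longrightarrow> eval I Y"
  shows "eval I X"
proof -
  have "cpl_at R Q w \<Gamma> X \<Longrightarrow> \<forall>Y. (Y, w) \<in> set \<Gamma> \<longrightarrow> eval I Y \<Longrightarrow> eval I X" for Q \<Gamma> X
    by (induction rule: cpl_at.induct) (use assms(2-4) in auto)
  with assms(5,6) show ?thesis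
    unfolding CPL_unfold[OF assms(1)] by blast
qed

lemma CPLs_dead_end_sound:
  assumes "cwf R" "\<And>u. \<not> R w u" "\<And>A. \<not> I (Dia A)" "\<And>A. I (Box A)"
    and "CPLs R \<Gamma> X w" "\<forall>Y. (Y, w) \<in> set \<Gamma> \<longrightarrow> eval I Y"
  shows "eval I X"
proof -
  have "cpls_at R Q w \<Gamma> X \<Longrightarrow> \<forall>Y. (Y, w) \<in> set \<Gamma> \<longrightarrow> eval I Y \<Longrightarrow> eval I X" for Q \<Gamma> X
    by (induction rule: cpls_at.induct) (use assms(2-4) in \<open>auto dest: tranclpD\<close>)
  with assms(5,6) show ?thesis
    unfolding CPLs_unfold[OF assms(1)] by blast
qed

definition edge01 :: "nat \<Rightarrow> nat \<Rightarrow> bool" where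
  "edge01 u v \<longleftrightarrow> u = 0 \<and> v = 1"

lemma edge01_from_0 [simp]: "edge01 0 v \<longleftrightarrow> v = 1"
  and edge01_from_Suc [simp]: "\<not> edge01 (Suc n) v"
  by (simp_all add: edge01_def)

lemma tranclp_edge01 [simp]: "edge01\<^sup>+\<^sup>+ = edge01"
proof (intro ext iffI)
  show "edge01\<^sup>+\<^sup>+ u v \<Longrightarrow> edge01 u v" for u v
    by (induction rule: tranclp_induct) (auto simp: edge01_def)
qed (rule tranclp.r_into_trancl)

lemma cwf_edge01: "cwf edge01"
  unfolding cwf_def by (metis edge01_def zero_neq_one)

lemma edge01_unreachable_0: "\<not> edge01\<^sup>*\<^sup>* (Suc n) 0"
proof
  assume "edge01\<^sup>*\<^sup>* (Suc n) 0"
  then show False by (cases rule: converse_rtranclpE) simp_all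
qed

lemma agree_from_edge01_Cons_0:
  "agree_from edge01 1 \<Gamma> \<Gamma>' \<Longrightarrow> agree_from edge01 1 ((A, 0) # \<Gamma>) \<Gamma>'"
  by (simp add: agree_from_Cons_unreachable edge01_unreachable_0)

lemma cpl_at_edge01_root_sound:
  assumes "\<And>A. I (Dia A) = CPL edge01 \<Gamma>\<^sub>1 A 1" "\<And>A. I (Box A) = CPL edge01 \<Gamma>\<^sub>1 A 1"
  shows "cpl_at edge01 (strat_beyond edge01 cpl_at 0) 0 \<Gamma> X \<Longrightarrow> agree_from edge01 1 \<Gamma> \<Gamma>\<^sub>1 \<Longrightarrow>
    \<forall>Y. (Y, 0) \<in> set \<Gamma> \<longrightarrow> eval I Y \<Longrightarrow> eval I X"
proof (induction rule: cpl_at.induct)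
  case (impI A \<Gamma> B)
  then show ?case using agree_from_edge01_Cons_0 by auto
qed (use assms CPL_agree_iff[OF cwf_edge01, of 1 _ \<Gamma>\<^sub>1] in \<open>auto simp: CPL_def\<close>)

lemma cpls_at_edge01_root_sound:
  assumes "\<And>A. I (Dia A) = CPLs edge01 \<Gamma>\<^sub>1 A 1" "\<And>A. I (Box A) = CPLs edge01 \<Gamma>\<^sub>1 A 1"
    and "\<not> CPLs edge01 \<Gamma>\<^sub>1 Bot 1" "\<And>A. \<not> CPLs edge01 \<Gamma>\<^sub>1 (Dia A) 1"
  shows "cpls_at edge01 (strat_beyond edge01 cpls_at 0) 0 \<Gamma> X \<Longrightarrow> agree_from edge01 1 \<Gamma> \<Gamma>\<^sub>1 \<Longrightarrow>
    \<forall>Y. (Y, 0) \<in> set \<Gamma> \<longrightarrow> eval I Y \<Longrightarrow> eval I X"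
proof (induction rule: cpls_at.induct)
  case (impI A \<Gamma> B)
  then show ?case using agree_from_edge01_Cons_0 by auto
qed (use assms CPLs_agree_iff[OF cwf_edge01, of 1 _ \<Gamma>\<^sub>1] in \<open>auto simp: CPLs_def\<close>)

lemma CPL_edge01_root_sound:
  assumes "CPL edge01 \<Gamma> X 0"
    and "\<And>A. I (Dia A) = CPL edge01 \<Gamma> A 1" "\<And>A. I (Box A) = CPL edge01 \<Gamma> A 1"
    and "\<forall>Y. (Y, 0) \<in> set \<Gamma> \<longrightarrow> eval I Y"
  shows "eval I X"
  using assms(1) unfolding CPL_unfold[OF cwf_edge01]
  by (rule cpl_at_edge01_root_sound[OF assms(2,3) _ agree_from_refl assms(4)])

lemma CPLs_edge01_root_sound:
  assumes "CPLs edge01 \<Gamma> X 0"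
    and "\<And>A. I (Dia A) = CPLs edge01 \<Gamma> A 1" "\<And>A. I (Box A) = CPLs edge01 \<Gamma> A 1"
    and "\<not> CPLs edge01 \<Gamma> Bot 1" "\<And>A. \<not> CPLs edge01 \<Gamma> (Dia A) 1"
    and "\<forall>Y. (Y, 0) \<in> set \<Gamma> \<longrightarrow> eval I Y"
  shows "eval I X"
  using assms(1) unfolding CPLs_unfold[OF cwf_edge01]
  by (rule cpls_at_edge01_root_sound[OF assms(2-5) _ agree_from_refl assms(6)])

lemma CPL_Bot_hyp: "cwf R \<Longrightarrow> (Bot, w) \<in> set \<Gamma> \<Longrightarrow> CPL R \<Gamma> X w"
  by (simp add: CPL_unfold cpl_at.botE cpl_at.hyp)

lemma CPL_edge01_de_morgan_fails:
  "\<not> CPL edge01 [(Bot, 1)] (Imp (Dia (Neg A)) (Neg (Box A))) 0"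
  "\<not> CPL edge01 [(Bot, 1)] (Imp (Box (Neg A)) (Neg (Dia A))) 0"
proof -
  have everything: "CPL edge01 [(Bot, 1)] B 1" for B
    by (rule CPL_Bot_hyp[OF cwf_edge01]) simp
  have "eval (\<lambda>_. True) X" if "CPL edge01 [(Bot, 1)] X 0" for X
    using that by (rule CPL_edge01_root_sound) (use everything in simp_all)
  then show "\<not> CPL edge01 [(Bot, 1)] (Imp (Dia (Neg A)) (Neg (Box A))) 0"
    and "\<not> CPL edge01 [(Bot, 1)] (Imp (Box (Neg A)) (Neg (Dia A))) 0"
    by fastforce+
qed

lemma
  fixes a :: 'a
  defines "I \<equiv> \<lambda>X :: 'a fm. case X of
      Dia B \<Rightarrow> CPL edge01 [] B 1 | Box B \<Rightarrow> CPL edge01 [] B 1 | _ \<Rightarrow> False"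
  shows CPL_edge01_neg_dia_imp_box_neg_fails:
      "\<not> CPL edge01 [] (Imp (Neg (Dia (Atom a))) (Box (Neg (Atom a)))) 0"
    and CPL_edge01_neg_box_imp_dia_neg_fails:
      "\<not> CPL edge01 [] (Imp (Neg (Box (Atom a))) (Dia (Neg (Atom a)))) 0"
proof -
  have "\<not> CPL edge01 [] (Atom a) 1"
    using CPL_dead_end_sound[OF cwf_edge01,
        where w = 1 and I = "\<lambda>X. case X of Box _ \<Rightarrow> True | _ \<Rightarrow> False"]
    by fastforce
  moreover have "\<not> CPL edge01 [] (Neg (Atom a)) 1"
    using CPL_dead_end_sound[OF cwf_edge01,
        where w = 1 and I = "\<lambda>X. case X of Dia _ \<Rightarrow> False | _ \<Rightarrow> True"]
    by fastforce
  ultimately show "\<not> CPL edge01 [] (Imp (Neg (Dia (Atom a))) (Box (Neg (Atom a)))) 0"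
    and "\<not> CPL edge01 [] (Imp (Neg (Box (Atom a))) (Dia (Neg (Atom a)))) 0"
    using CPL_edge01_root_sound[where I = I] by (fastforce simp: I_def)+
qed

lemma
  fixes a :: 'a
  defines "I \<equiv> \<lambda>X :: 'a fm. case X of
      Dia B \<Rightarrow> CPLs edge01 [] B 1 | Box B \<Rightarrow> CPLs edge01 [] B 1 | _ \<Rightarrow> False"
  shows CPLs_edge01_neg_dia_imp_box_neg_fails:
      "\<not> CPLs edge01 [] (Imp (Neg (Dia (Atom a))) (Box (Neg (Atom a)))) 0"
    and CPLs_edge01_neg_box_imp_dia_neg_fails:
      "\<not> CPLs edge01 [] (Imp (Neg (Box (Atom a))) (Dia (Neg (Atom a)))) 0"
proof -
  have "\<not> CPLs edge01 [] (Atom a) 1" "\<not> CPLs edge01 [] Bot 1"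
    using CPLs_dead_end_sound[OF cwf_edge01,
        where w = 1 and I = "\<lambda>X. case X of Box _ \<Rightarrow> True | _ \<Rightarrow> False"]
    by fastforce+
  moreover have "\<not> CPLs edge01 [] (Neg (Atom a)) 1" "\<not> CPLs edge01 [] (Dia B) 1" for B
    using CPLs_dead_end_sound[OF cwf_edge01,
        where w = 1 and I = "\<lambda>X. case X of Dia _ \<Rightarrow> False | _ \<Rightarrow> True"]
    by fastforce+
  ultimately show "\<not> CPLs edge01 [] (Imp (Neg (Dia (Atom a))) (Box (Neg (Atom a)))) 0"
    and "\<not> CPLs edge01 [] (Imp (Neg (Box (Atom a))) (Dia (Neg (Atom a)))) 0"
    using CPLs_edge01_root_sound[where I = I] by (fastforce simp: I_def)+
qed

theorem theorem8:
  shows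
   "\<comment> \<open>(i)\<close>
    (\<forall>(R :: 'w \<Rightarrow> 'w \<Rightarrow> bool) (w :: 'w) (\<Gamma> :: ('a,'w) ctx) (A :: 'a fm). cwf R \<longrightarrow>
        CPLs R \<Gamma> (Imp (Dia (Neg A)) (Neg (Box A))) w \<and>
        CPLs R \<Gamma> (Imp (Box (Neg A)) (Neg (Dia A))) w)
  \<and> \<comment> \<open>(ii)\<close>
    (\<exists>(R :: nat \<Rightarrow> nat \<Rightarrow> bool) w (\<Gamma> :: ('a,nat) ctx) A. cwf R \<and>
        \<not> CPL R \<Gamma> (Imp (Dia (Neg A)) (Neg (Box A))) w)
  \<and> (\<exists>(R :: nat \<Rightarrow> nat \<Rightarrow> bool) w (\<Gamma> :: ('a,nat) ctx) A. cwf R \<and>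
        \<not> CPL R \<Gamma> (Imp (Box (Neg A)) (Neg (Dia A))) w)
  \<and> \<comment> \<open>(iii)\<close>
    (\<forall>(R :: 'w \<Rightarrow> 'w \<Rightarrow> bool) (\<Gamma> :: ('a,'w) ctx) (w :: 'w) (A :: 'a fm). cwf R \<longrightarrow>
        \<not> (\<exists>w'. R w w' \<and> Seq R \<Gamma> Bot w') \<longrightarrow>
        Seq R \<Gamma> (Imp (Dia (Neg A)) (Neg (Box A))) w \<and>
        Seq R \<Gamma> (Imp (Box (Neg A)) (Neg (Dia A))) w)
  \<and> \<comment> \<open>(iv)\<close>
    (\<exists>(R :: nat \<Rightarrow> nat \<Rightarrow> bool) w (\<Gamma> :: ('a,nat) ctx) A. cwf R \<and>
        \<not> CPL R \<Gamma> (Imp (Neg (Dia A)) (Box (Neg A))) w)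
  \<and> (\<exists>(R :: nat \<Rightarrow> nat \<Rightarrow> bool) w (\<Gamma> :: ('a,nat) ctx) A. cwf R \<and>
        \<not> CPLs R \<Gamma> (Imp (Neg (Dia A)) (Box (Neg A))) w)
  \<and> \<comment> \<open>(v)\<close>
    (\<exists>(R :: nat \<Rightarrow> nat \<Rightarrow> bool) w (\<Gamma> :: ('a,nat) ctx) A. cwf R \<and>
        \<not> CPL R \<Gamma> (Imp (Neg (Box A)) (Dia (Neg A))) w)
  \<and> (\<exists>(R :: nat \<Rightarrow> nat \<Rightarrow> bool) w (\<Gamma> :: ('a,nat) ctx) A. cwf R \<and>
        \<not> CPLs R \<Gamma> (Imp (Neg (Box A)) (Dia (Neg A))) w)"
proof (intro conjI allI HOL.impI)
  show "\<exists>R w (\<Gamma> :: ('a, nat) ctx) A. cwf R \<and> \<not> CPL R \<Gamma> (Imp (Dia (Neg A)) (Neg (Box A))) w"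
    using cwf_edge01 CPL_edge01_de_morgan_fails(1) by metis
  show "\<exists>R w (\<Gamma> :: ('a, nat) ctx) A. cwf R \<and> \<not> CPL R \<Gamma> (Imp (Box (Neg A)) (Neg (Dia A))) w"
    using cwf_edge01 CPL_edge01_de_morgan_fails(2) by metis
  show "\<exists>R w (\<Gamma> :: ('a, nat) ctx) A. cwf R \<and> \<not> CPL R \<Gamma> (Imp (Neg (Dia A)) (Box (Neg A))) w"
    using cwf_edge01 CPL_edge01_neg_dia_imp_box_neg_fails by metis
  show "\<exists>R w (\<Gamma> :: ('a, nat) ctx) A. cwf R \<and> \<not> CPLs R \<Gamma> (Imp (Neg (Dia A)) (Box (Neg A))) w"
    using cwf_edge01 CPLs_edge01_neg_dia_imp_box_neg_fails by metis
  show "\<exists>R w (\<Gamma> :: ('a, nat) ctx) A. cwf R \<and> \<not> CPL R \<Gamma> (Imp (Neg (Box A)) (Dia (Neg A))) w"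
    using cwf_edge01 CPL_edge01_neg_box_imp_dia_neg_fails by metis
  show "\<exists>R w (\<Gamma> :: ('a, nat) ctx) A. cwf R \<and> \<not> CPLs R \<Gamma> (Imp (Neg (Box A)) (Dia (Neg A))) w"
    using cwf_edge01 CPLs_edge01_neg_box_imp_dia_neg_fails by metis
qed (auto intro: CPLs_dia_neg_imp_neg_box CPLs_box_neg_imp_neg_dia
       Seq_dia_neg_imp_neg_box Seq_box_neg_imp_neg_dia)

end
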